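(* Let $n\ge s\ge 1$ and $\ell\ge 1$ be integers, and let $Q=\operatorname{diag}(Q_s, I_{n-s})$ be an $n\times n$ block diagonal matrix, where $Q_s$ is a rational orthogonal matrix of order $s$ and level $\ell$ each of whose entries is either $0$ or a non-integer rational number, and $I_{n-s}$ is the identity matrix of order $n-s$. Let $0<p<1$ and let $A$ be the adjacency matrix of a random graph $G\sim\mathcal{G}(n,p)$. Then $$\Pr\big(Q^\top A Q \text{ is an integer matrix}\big)\le \hat p^{\,\frac{s}{2\ell^4}\left(\frac{s}{2\ell^4}+n-s-1\right)},$$ where $\hat p=\max\{p,1-p\}$.
   Context: $\mathcal{G}(n,p)$ is the random graph on $n$ labelled vertices in which each possible edge is present independently with probability $p$; its adjacency matrix has $(i,j)$ entry $1$ if $ij$ is an edge and $0$ otherwise. The level of a rational matrix $M$ is the smallest positive integer $\ell$ such that $\ell M$ has integer entries. A rational orthogonal matrix is a matrix with rational entries satisfying $Q^\top Q=I$. *)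

theory Defs
  imports "HOL-Probability.Probability"
begin

definition edge_slots :: "nat \<Rightarrow> (nat \<times> nat) set" where
  "edge_slots n = {(i, j). i < j \<and> j < n}"

text \<open>The random graph G(n,p): each possible edge present independently with probability p.
  A graph is represented by its edge indicator function (False outside the edge slots).\<close>
definition gnp :: "nat \<Rightarrow> real \<Rightarrow> (nat \<times> nat \<Rightarrow> bool) pmf" where
  "gnp n p = Pi_pmf (edge_slots n) False (\<lambda>_. bernoulli_pmf p)"

definition adj_matrix :: "(nat \<times> nat \<Rightarrow> bool) \<Rightarrow> nat \<Rightarrow> nat \<Rightarrow> rat" where
  "adj_matrix G i j = (if i \<noteq> j \<and> G (min i j, max i j) then 1 else 0)"

definition int_matrix :: "nat \<Rightarrow> (nat \<Rightarrow> nat \<Rightarrow> rat) \<Rightarrow> bool" where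
  "int_matrix m M \<longleftrightarrow> (\<forall>i<m. \<forall>j<m. M i j \<in> \<int>)"

definition rat_orthogonal :: "nat \<Rightarrow> (nat \<Rightarrow> nat \<Rightarrow> rat) \<Rightarrow> bool" where
  "rat_orthogonal m Q \<longleftrightarrow>
     (\<forall>i<m. \<forall>j<m. (\<Sum>k<m. Q k i * Q k j) = (if i = j then 1 else 0))"

definition level :: "nat \<Rightarrow> (nat \<Rightarrow> nat \<Rightarrow> rat) \<Rightarrow> nat" where
  "level m M = (LEAST l::nat. 0 < l \<and> int_matrix m (\<lambda>i j. of_nat l * M i j))"

definition block_diag_id :: "nat \<Rightarrow> (nat \<Rightarrow> nat \<Rightarrow> rat) \<Rightarrow> nat \<Rightarrow> nat \<Rightarrow> rat" where
  "block_diag_id s Qs i j =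
     (if i < s \<and> j < s then Qs i j else if i = j then 1 else 0)"

definition congr :: "nat \<Rightarrow> (nat \<Rightarrow> nat \<Rightarrow> rat) \<Rightarrow> (nat \<Rightarrow> nat \<Rightarrow> rat) \<Rightarrow> nat \<Rightarrow> nat \<Rightarrow> rat" where
  "congr n Q A i j = (\<Sum>k<n. \<Sum>m<n. Q k i * A k m * Q m j)"

end

theory Submission
  imports Defs "Jordan_Normal_Form.Determinant"
begin

(* Every row and column of Q_s is a unit vector with entries in (1/l)Z, so it has at most l^2
   nonzero entries; hence the support of a row meets the supports of at most l^4 rows, and a
   greedy choice yields a set I of m >= s/l^4 rows with pairwise disjoint supports.  Let F consist
   of the edges inside I and the edges from I to the last n - s vertices.  If two graphs with
   integral Q^T A Q differ only on F, the difference D of their adjacency matrices also makes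
   Q^T D Q integral.  For a differing edge ab pick columns c, c' in the supports of rows a and b:
   by disjointness the entry (c, c') of Q^T D Q (or (c, b) when b >= s) is the single term
   +-(Q_s)_ac (Q_s)_bc' (or +-(Q_s)_ac), of absolute value strictly between 0 and 1.  So the event
   is determined by the edges outside F and has probability at most max(p, 1-p)^|F|, where
   |F| = m(m-1)/2 + m(n-s). *)

lemma pmf_bernoulli_le_max:
  assumes "0 \<le> p" "p \<le> 1"
  shows "pmf (bernoulli_pmf p) b \<le> max p (1 - p)"
  using assms by (cases b) auto

lemma pmf_Pi_bernoulli_le:
  assumes "finite D" "F \<subseteq> D" "0 \<le> p" "p \<le> 1"
  shows "pmf (Pi_pmf D False (\<lambda>_. bernoulli_pmf p)) G
    \<le> max p (1 - p) ^ card F *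
       pmf (Pi_pmf (D - F) False (\<lambda>_. bernoulli_pmf p)) (\<lambda>x. x \<in> D - F \<and> G x)"
proof (cases "\<forall>x. x \<notin> D \<longrightarrow> \<not> G x")
  case True
  have "pmf (Pi_pmf D False (\<lambda>_. bernoulli_pmf p)) G
      = (\<Prod>x\<in>D - F. pmf (bernoulli_pmf p) (G x)) * (\<Prod>x\<in>F. pmf (bernoulli_pmf p) (G x))"
    using True assms(1,2) by (simp add: pmf_Pi prod.subset_diff)
  also have "\<dots> \<le> (\<Prod>x\<in>D - F. pmf (bernoulli_pmf p) (G x)) * max p (1 - p) ^ card F"
    using prod_mono[of F "\<lambda>x. pmf (bernoulli_pmf p) (G x)" "\<lambda>_. max p (1 - p)"]
      pmf_bernoulli_le_max[OF assms(3,4)]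
    by (intro mult_left_mono prod_nonneg) auto
  also have "(\<Prod>x\<in>D - F. pmf (bernoulli_pmf p) (G x))
      = pmf (Pi_pmf (D - F) False (\<lambda>_. bernoulli_pmf p)) (\<lambda>x. x \<in> D - F \<and> G x)"
    using assms(1) by (auto simp: pmf_Pi intro!: prod.cong)
  finally show ?thesis by (simp add: mult.commute)
next
  case False
  then show ?thesis using assms(1,3) by (simp add: pmf_Pi_outside)
qed

lemma measure_Pi_bernoulli_le_if_determined:
  assumes "finite D" "F \<subseteq> D" "0 \<le> p" "p \<le> 1"
    and determined: "\<And>G G'. G \<in> E \<Longrightarrow> G' \<in> E \<Longrightarrow> \<forall>x. x \<notin> F \<longrightarrow> G x = G' x \<Longrightarrow> G = G'"
  shows "measure_pmf.prob (Pi_pmf D False (\<lambda>_. bernoulli_pmf p)) E \<le> max p (1 - p) ^ card F"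
proof -
  define X where "X = Pi_pmf D False (\<lambda>_. bernoulli_pmf p)"
  define Y where "Y = Pi_pmf (D - F) False (\<lambda>_. bernoulli_pmf p)"
  define restr where "restr G x \<longleftrightarrow> x \<in> D - F \<and> G x" for G :: "'a \<Rightarrow> bool" and x
  define S where "S = E \<inter> set_pmf X"
  have X_outside: "\<not> G x" if "G \<in> set_pmf X" "x \<notin> D" for G x
    using subsetD[OF set_Pi_pmf_subset[OF assms(1), of False "\<lambda>_. bernoulli_pmf p"]] that
    unfolding X_def by blast
  have "finite (set_pmf X)"
    unfolding X_def
    by (rule finite_subset[OF set_Pi_pmf_subset'[OF assms(1)]])
      (intro finite_PiE_dflt assms(1) finite)
  then have "finite S" by (simp add: S_def)
  have "inj_on restr S"
  proof (rule inj_onI)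
    fix G G' assume "G \<in> S" "G' \<in> S" "restr G = restr G'"
    have "G x = G' x" if "x \<notin> F" for x
    proof (cases "x \<in> D")
      case True
      then show ?thesis using fun_cong[OF \<open>restr G = restr G'\<close>, of x] that by (simp add: restr_def)
    next
      case False
      then show ?thesis using X_outside \<open>G \<in> S\<close> \<open>G' \<in> S\<close> by (auto simp: S_def)
    qed
    then show "G = G'"
      using determined \<open>G \<in> S\<close> \<open>G' \<in> S\<close> by (simp add: S_def)
  qed
  have "measure_pmf.prob X E = measure_pmf.prob X S"
    by (simp add: S_def measure_Int_set_pmf)
  also have "\<dots> = (\<Sum>G\<in>S. pmf X G)"
    using \<open>finite S\<close> by (simp add: measure_measure_pmf_finite)
  also have "\<dots> \<le> (\<Sum>G\<in>S. max p (1 - p) ^ card F * pmf Y (restr G))"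
    using pmf_Pi_bernoulli_le[OF assms(1-4)] unfolding X_def Y_def restr_def
    by (intro sum_mono) blast
  also have "\<dots> = max p (1 - p) ^ card F * measure_pmf.prob Y (restr ` S)"
    using \<open>finite S\<close> \<open>inj_on restr S\<close>
    by (simp add: sum_distrib_left[symmetric] sum.reindex measure_measure_pmf_finite)
  also have "\<dots> \<le> max p (1 - p) ^ card F"
    by (intro mult_left_le) auto
  finally show ?thesis by (simp add: X_def)
qed

lemma exists_pairwise_independent_subset:
  assumes "finite V" "\<And>i. i \<in> V \<Longrightarrow> R i i" "\<And>i j. R i j \<Longrightarrow> R j i"
    and "\<And>i. i \<in> V \<Longrightarrow> card {j \<in> V. R i j} \<le> d"
  shows "\<exists>I \<subseteq> V. pairwise (\<lambda>i j. \<not> R i j) I \<and> card V \<le> d * card I"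
  using assms
proof (induction "card V" arbitrary: V rule: less_induct)
  case less
  show ?case
  proof (cases "V = {}")
    case False
    then obtain v where "v \<in> V" by auto
    define N where "N = {j \<in> V. R v j}"
    have "v \<in> N" "N \<subseteq> V"
      using \<open>v \<in> V\<close> less.prems(2) by (auto simp: N_def)
    have "finite N" using \<open>N \<subseteq> V\<close> less.prems(1) by (rule finite_subset)
    have "card (V - N) < card V"
      using \<open>v \<in> N\<close> \<open>v \<in> V\<close> less.prems(1) by (intro psubset_card_mono) auto
    moreover have "card {j \<in> V - N. R i j} \<le> d" if "i \<in> V - N" for i
    proof -
      have "card {j \<in> V - N. R i j} \<le> card {j \<in> V. R i j}"
        using less.prems(1) by (intro card_mono) auto
      then show ?thesis using less.prems(4)[of i] that by simp
    qed
    ultimately obtain I where I: "I \<subseteq> V - N" "pairwise (\<lambda>i j. \<not> R i j) I"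
      "card (V - N) \<le> d * card I"
      using less.hyps[of "V - N"] less.prems by blast
    have "v \<notin> I" "finite I"
      using I(1) \<open>v \<in> N\<close> less.prems(1) finite_subset by auto
    have "card V = card (V - N) + card N"
      using card_Diff_subset[OF \<open>finite N\<close> \<open>N \<subseteq> V\<close>] card_mono[OF less.prems(1) \<open>N \<subseteq> V\<close>]
      by simp
    also have "\<dots> \<le> d * card (insert v I)"
      using I(3) less.prems(4)[OF \<open>v \<in> V\<close>] \<open>v \<notin> I\<close> \<open>finite I\<close> by (simp add: N_def)
    finally have "card V \<le> d * card (insert v I)" .
    moreover have "pairwise (\<lambda>i j. \<not> R i j) (insert v I)"
      using I(1,2) less.prems(3) by (auto simp: pairwise_insert N_def)
    moreover have "insert v I \<subseteq> V" using I(1) \<open>v \<in> V\<close> by auto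
    ultimately show ?thesis by blast
  qed simp
qed

lemma card_less_pairs:
  fixes I :: "'a::linorder set"
  assumes "finite I"
  shows "2 * card {(i, j). i \<in> I \<and> j \<in> I \<and> i < j} + card I = card I * card I"
proof -
  define U where "U = {(i, j). i \<in> I \<and> j \<in> I \<and> i < j}"
  define L where "L = prod.swap ` U"
  define Dg where "Dg = (\<lambda>i. (i, i)) ` I"
  have "I \<times> I = (U \<union> L) \<union> Dg"
  proof (intro equalityI subsetI)
    fix x assume "x \<in> I \<times> I"
    then obtain i j where "x = (i, j)" "i \<in> I" "j \<in> I" by auto
    then show "x \<in> U \<union> L \<union> Dg"
      by (cases i j rule: linorder_cases) (auto simp: U_def L_def Dg_def)
  qed (auto simp: U_def L_def Dg_def)
  moreover have "finite U" "finite L" "finite Dg"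
    using assms by (auto intro: finite_subset[of _ "I \<times> I"] simp: U_def L_def Dg_def)
  moreover have "U \<inter> L = {}" "(U \<union> L) \<inter> Dg = {}"
    by (auto simp: U_def L_def Dg_def)
  ultimately have "card (I \<times> I) = card U + card L + card Dg"
    by (simp add: card_Un_disjoint)
  moreover have "card L = card U" by (simp add: L_def card_image)
  moreover have "card Dg = card I" by (simp add: Dg_def card_image inj_on_def)
  ultimately show ?thesis by (simp add: card_cartesian_product U_def)
qed

lemma rat_orthogonal_rows:
  assumes "rat_orthogonal s Q" "i < s" "j < s"
  shows "(\<Sum>k<s. Q i k * Q j k) = (if i = j then 1 else 0)"
proof -
  define M where "M = mat s s (\<lambda>(i, j). Q i j)"
  have M: "M \<in> carrier_mat s s" by (simp add: M_def)
  have "transpose_mat M * M = 1\<^sub>m s"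
    using assms(1)
    by (intro eq_matI) (auto simp: M_def scalar_prod_def rat_orthogonal_def lessThan_atLeast0)
  then have "M * transpose_mat M = 1\<^sub>m s"
    using mat_mult_left_right_inverse[of "transpose_mat M" s M] M by auto
  then have "(M * transpose_mat M) $$ (i, j) = 1\<^sub>m s $$ (i, j)" by simp
  then show ?thesis using assms(2,3) by (simp add: M_def scalar_prod_def lessThan_atLeast0)
qed

lemma rat_orthogonal_row_support_nonempty:
  assumes "rat_orthogonal s Q" "i < s"
  shows "support_on {..<s} (Q i) \<noteq> {}"
proof
  assume "support_on {..<s} (Q i) = {}"
  then have "(\<Sum>k<s. Q i k * Q i k) = 0" by (auto simp: support_on_def)
  then show False using rat_orthogonal_rows[OF assms assms(2)] by simp
qed

lemma rat_orthogonal_abs_less_1: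
  assumes "rat_orthogonal s Q" "i < s" "j < s" "Q i j = 0 \<or> Q i j \<notin> \<int>"
  shows "\<bar>Q i j\<bar> < 1"
proof -
  have "(Q i j)\<^sup>2 \<le> (\<Sum>k<s. Q k j * Q k j)"
    using member_le_sum[of i "{..<s}" "\<lambda>k. Q k j * Q k j"] assms(2) by (simp add: power2_eq_square)
  also have "\<dots> = 1" using assms(1,3) by (simp add: rat_orthogonal_def)
  finally have "\<bar>Q i j\<bar> \<le> 1" by (simp add: abs_square_le_1)
  moreover have "\<bar>Q i j\<bar> \<noteq> 1"
    using assms(4) by (auto simp: abs_if split: if_splits)
  ultimately show ?thesis by simp
qed

lemma card_support_on_le_sq:
  fixes v :: "nat \<Rightarrow> rat"
  assumes "(\<Sum>k<s. v k * v k) = 1" "0 < l" "\<And>k. k < s \<Longrightarrow> of_nat l * v k \<in> \<int>"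
  shows "card (support_on {..<s} v) \<le> l\<^sup>2"
proof -
  have "1 \<le> (of_nat l * v k)\<^sup>2" if "k \<in> support_on {..<s} v" for k
  proof -
    have "of_nat l * v k \<noteq> 0"
      using assms that by (auto simp: support_on_def)
    then have "1 \<le> \<bar>of_nat l * v k\<bar>"
      using assms(3) that by (intro Ints_nonzero_abs_ge1) (auto simp: support_on_def)
    then show ?thesis using abs_le_square_iff[of 1 "of_nat l * v k"] by simp
  qed
  then have "of_nat (card (support_on {..<s} v)) \<le> (\<Sum>k\<in>support_on {..<s} v. (of_nat l * v k)\<^sup>2)"
    using sum_mono[of "support_on {..<s} v" "\<lambda>_. 1::rat"] by simp
  also have "\<dots> \<le> (\<Sum>k<s. (of_nat l * v k)\<^sup>2)"
    by (intro sum_mono2) (auto simp: support_on_def)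
  also have "\<dots> = of_nat l ^ 2 * (\<Sum>k<s. v k * v k)"
    by (simp add: power2_eq_square sum_distrib_left mult_ac)
  also have "\<dots> = of_nat (l\<^sup>2)"
    using assms(1) by simp
  finally show ?thesis by (simp only: of_nat_le_iff)
qed

lemma exists_common_denominator:
  fixes X :: "rat set"
  assumes "finite X"
  shows "\<exists>l::nat. 0 < l \<and> (\<forall>x\<in>X. of_nat l * x \<in> \<int>)"
proof -
  define den where "den x = nat (snd (quotient_of x))" for x
  have den_pos: "0 < den x" for x
    using quotient_of_denom_pos' by (simp add: den_def)
  have den_Ints: "of_nat (den x) * x \<in> \<int>" for x
  proof -
    obtain a b where ab: "quotient_of x = (a, b)" by fastforce
    then have "of_nat (den x) * x = of_int a"
      using quotient_of_denom_pos[OF ab] quotient_of_div[OF ab] by (simp add: den_def)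
    then show ?thesis by simp
  qed
  have "of_nat (prod den X) * x \<in> \<int>" if "x \<in> X" for x
  proof -
    have "of_nat (prod den X) * x = of_nat (prod den (X - {x})) * (of_nat (den x) * x)"
      by (subst prod.remove[OF assms that]) (simp add: mult_ac)
    then show ?thesis by (metis Ints_mult Ints_of_nat den_Ints)
  qed
  moreover have "0 < prod den X" using den_pos by (simp add: prod_pos)
  ultimately show ?thesis by blast
qed

lemma level_scales_to_Ints:
  shows "0 < level s Q" and "\<And>i j. i < s \<Longrightarrow> j < s \<Longrightarrow> of_nat (level s Q) * Q i j \<in> \<int>"
proof -
  obtain l :: nat where "0 < l" "\<forall>x\<in>(\<lambda>(i, j). Q i j) ` ({..<s} \<times> {..<s}). of_nat l * x \<in> \<int>"
    using exists_common_denominator[of "(\<lambda>(i, j). Q i j) ` ({..<s} \<times> {..<s})"] by auto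
  then have "\<exists>l. 0 < l \<and> int_matrix s (\<lambda>i j. of_nat l * Q i j)"
    by (auto simp: int_matrix_def)
  then have "0 < level s Q \<and> int_matrix s (\<lambda>i j. of_nat (level s Q) * Q i j)"
    unfolding level_def by (rule LeastI_ex)
  then show "0 < level s Q" "\<And>i j. i < s \<Longrightarrow> j < s \<Longrightarrow> of_nat (level s Q) * Q i j \<in> \<int>"
    by (auto simp: int_matrix_def)
qed

lemma exists_rows_disjoint_supports:
  assumes "rat_orthogonal s Q"
  obtains I where "I \<subseteq> {..<s}" "disjoint_family_on (\<lambda>i. support_on {..<s} (Q i)) I"
    "s \<le> level s Q ^ 4 * card I"
proof -
  let ?l = "level s Q"
  let ?row = "\<lambda>i. support_on {..<s} (Q i)" and ?col = "\<lambda>c. support_on {..<s} (\<lambda>k. Q k c)"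
  define R where "R i j \<longleftrightarrow> ?row i \<inter> ?row j \<noteq> {}" for i j
  have row_card: "card (?row i) \<le> ?l\<^sup>2" if "i < s" for i
    using card_support_on_le_sq[where v = "Q i" and l = ?l] rat_orthogonal_rows[OF assms that that]
      level_scales_to_Ints that by auto
  have col_card: "card (?col c) \<le> ?l\<^sup>2" if "c < s" for c
    using card_support_on_le_sq[where v = "\<lambda>k. Q k c" and l = ?l] assms that level_scales_to_Ints
    by (auto simp: rat_orthogonal_def)
  have "card {j \<in> {..<s}. R i j} \<le> ?l ^ 4" if "i < s" for i
  proof -
    have "{j \<in> {..<s}. R i j} \<subseteq> (\<Union>c\<in>?row i. ?col c)"
      by (auto simp: R_def support_on_def)
    then have "card {j \<in> {..<s}. R i j} \<le> card (\<Union>c\<in>?row i. ?col c)"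
      by (intro card_mono) auto
    also have "\<dots> \<le> (\<Sum>c\<in>?row i. card (?col c))"
      by (rule card_UN_le) auto
    also have "\<dots> \<le> (\<Sum>c\<in>?row i. ?l\<^sup>2)"
      by (intro sum_mono col_card) (simp add: support_on_def)
    also have "\<dots> = card (?row i) * ?l\<^sup>2" by simp
    also have "\<dots> \<le> ?l\<^sup>2 * ?l\<^sup>2"
      using row_card[OF that] by (rule mult_right_mono) simp
    finally show ?thesis by (simp add: power_add[symmetric])
  qed
  moreover have "R i i" if "i < s" for i
    using rat_orthogonal_row_support_nonempty[OF assms that] by (simp add: R_def)
  ultimately obtain I where
    "I \<subseteq> {..<s}" "pairwise (\<lambda>i j. \<not> R i j) I" "card {..<s} \<le> ?l ^ 4 * card I"
    using exists_pairwise_independent_subset[of "{..<s}" R "?l ^ 4"] by (auto simp: R_def)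
  then show ?thesis
    using that by (auto simp: disjoint_family_on_def pairwise_def R_def)
qed

lemma quadratic_exponent_le:
  fixes t m a b c :: real
  assumes "0 \<le> t" "2 * t \<le> m" "1 \<le> m" "b \<le> a" "2 * c + m = m * m + 2 * m * (a - b)"
  shows "t * (t + a - b - 1) \<le> c"
proof -
  have "t * (a - b) \<le> m * (a - b)" using assms by (intro mult_right_mono) auto
  moreover have "t * (t - 1) \<le> (m * m - m) / 2"
  proof (cases "t \<le> 1")
    case True
    then have "t * (t - 1) \<le> 0" using assms(1) by (simp add: mult_nonneg_nonpos)
    also have "0 \<le> (m * m - m) / 2" using assms(3) by simp
    finally show ?thesis .
  next
    case False
    have "t * (t - 1) \<le> (m / 2) * (m / 2 - 1)"
      using False assms(2) by (intro mult_mono) auto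
    also have "\<dots> \<le> (m * m - m) / 2" by (simp add: algebra_simps)
    finally show ?thesis .
  qed
  ultimately show ?thesis using assms(5) by (simp add: algebra_simps)
qed

lemma finite_edge_slots: "finite (edge_slots n)"
  by (rule finite_subset[of _ "{..<n} \<times> {..<n}"]) (auto simp: edge_slots_def)

lemma congr_diff:
  "congr n Q (\<lambda>i j. A i j - B i j) u v = congr n Q A u v - congr n Q B u v"
  by (simp add: congr_def algebra_simps sum_subtractf)

lemma block_diag_id_left_cols:
  "c < s \<Longrightarrow> block_diag_id s Qs k c = (if k < s then Qs k c else 0)"
  by (simp add: block_diag_id_def)

lemma block_diag_id_right_cols:
  "s \<le> b \<Longrightarrow> block_diag_id s Qs m b = (if m = b then 1 else 0)"
  by (simp add: block_diag_id_def)

lemma sum_sum_eq_single: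
  fixes f :: "'a \<Rightarrow> 'b \<Rightarrow> 'c::comm_monoid_add"
  assumes "finite A" "finite B" "a \<in> A" "b \<in> B"
    and "\<And>x y. x \<in> A \<Longrightarrow> y \<in> B \<Longrightarrow> f x y \<noteq> 0 \<Longrightarrow> x = a \<and> y = b"
  shows "(\<Sum>x\<in>A. \<Sum>y\<in>B. f x y) = f a b"
proof -
  have "(\<Sum>x\<in>A - {a}. \<Sum>y\<in>B. f x y) = 0"
    using assms(5) by (auto intro!: sum.neutral)
  moreover have "(\<Sum>y\<in>B - {b}. f a y) = 0"
    using assms(5)[OF assms(3)] by (auto intro!: sum.neutral)
  ultimately show ?thesis
    using assms(1-4) by (simp add: sum.remove)
qed

definition forced_slots :: "nat \<Rightarrow> nat \<Rightarrow> nat set \<Rightarrow> (nat \<times> nat) set" where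
  "forced_slots s n I = {(i, j). i \<in> I \<and> j \<in> I \<and> i < j} \<union> I \<times> {s..<n}"

locale disjoint_support_rows =
  fixes s n :: nat and Qs :: "nat \<Rightarrow> nat \<Rightarrow> rat" and I :: "nat set"
  assumes rows_subset: "I \<subseteq> {..<s}" and s_le_n: "s \<le> n"
    and disjoint_supports: "disjoint_family_on (\<lambda>i. support_on {..<s} (Qs i)) I"
    and rows_nonzero: "\<And>i. i \<in> I \<Longrightarrow> support_on {..<s} (Qs i) \<noteq> {}"
    and entries_abs_less_1: "\<And>i j. i < s \<Longrightarrow> j < s \<Longrightarrow> \<bar>Qs i j\<bar> < 1"
begin

lemma row_eq_if_common_support:
  "i \<in> I \<Longrightarrow> k \<in> I \<Longrightarrow> c \<in> support_on {..<s} (Qs i) \<Longrightarrow> c \<in> support_on {..<s} (Qs k)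
    \<Longrightarrow> k = i"
  using disjoint_supports by (auto simp: disjoint_family_on_def)

lemma forced_slots_subset_edge_slots: "forced_slots s n I \<subseteq> edge_slots n"
  using rows_subset s_le_n by (auto simp: forced_slots_def edge_slots_def)

lemma card_forced_slots:
  "2 * card (forced_slots s n I) + card I = card I * card I + 2 * card I * (n - s)"
proof -
  have "finite I" using rows_subset finite_subset by blast
  let ?F = "{(i, j). i \<in> I \<and> j \<in> I \<and> i < j}"
  have "finite ?F" using \<open>finite I\<close> by (auto intro: finite_subset[of _ "I \<times> I"])
  moreover have "?F \<inter> I \<times> {s..<n} = {}" using rows_subset by auto
  ultimately have "card (forced_slots s n I) = card ?F + card I * (n - s)"
    using \<open>finite I\<close> by (simp add: forced_slots_def card_Un_disjoint card_cartesian_product)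
  then show ?thesis using card_less_pairs[OF \<open>finite I\<close>] by simp
qed

lemma exponent_le_card_forced_slots:
  assumes "1 \<le> s" "0 < l" "s \<le> l ^ 4 * card I"
  shows "real s / (2 * real l ^ 4) * (real s / (2 * real l ^ 4) + real n - real s - 1)
    \<le> real (card (forced_slots s n I))"
proof (rule quadratic_exponent_le)
  have "real s \<le> real l ^ 4 * real (card I)"
    using assms(3) by (metis of_nat_le_iff of_nat_mult of_nat_power)
  then show "2 * (real s / (2 * real l ^ 4)) \<le> real (card I)"
    using assms(2) by (simp add: field_simps)
  show "1 \<le> real (card I)" using assms(1,3) by (cases "card I") auto
  show "2 * real (card (forced_slots s n I)) + real (card I)
      = real (card I) * real (card I) + 2 * real (card I) * (real n - real s)"
    using arg_cong[OF card_forced_slots, of real] s_le_n by (simp add: of_nat_diff)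
qed (use s_le_n in auto)

context
  fixes D :: "nat \<Rightarrow> nat \<Rightarrow> rat"
  assumes D_support: "\<And>k m. D k m \<noteq> 0 \<Longrightarrow> (min k m, max k m) \<in> forced_slots s n I"
begin

lemma congr_entry_right_block:
  assumes "a \<in> I" "s \<le> b" "b < n" "c \<in> support_on {..<s} (Qs a)"
  shows "congr n (block_diag_id s Qs) D c b = Qs a c * D a b"
proof -
  have "a < s" "c < s" using assms(1,4) rows_subset by (auto simp: support_on_def)
  have "congr n (block_diag_id s Qs) D c b
      = block_diag_id s Qs a c * D a b * block_diag_id s Qs b b"
    unfolding congr_def
  proof (rule sum_sum_eq_single)
    fix k m
    assume "block_diag_id s Qs k c * D k m * block_diag_id s Qs m b \<noteq> 0"
    then have "m = b" "k < s" "c \<in> support_on {..<s} (Qs k)" "D k b \<noteq> 0"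
      using block_diag_id_left_cols[OF \<open>c < s\<close>] block_diag_id_right_cols[OF assms(2)] \<open>c < s\<close>
      by (auto simp: support_on_def split: if_splits)
    moreover from this have "(k, b) \<in> forced_slots s n I"
      using D_support[of k b] assms(2) by (simp add: min_def max_def)
    ultimately have "k \<in> I" using rows_subset assms(2) by (auto simp: forced_slots_def)
    then show "k = a \<and> m = b"
      using row_eq_if_common_support[OF assms(1) _ assms(4)] \<open>m = b\<close>
        \<open>c \<in> support_on {..<s} (Qs k)\<close>
      by blast
  qed (use \<open>a < s\<close> assms(2,3) in auto)
  then show ?thesis
    using block_diag_id_left_cols[OF \<open>c < s\<close>, where k = a]
      block_diag_id_right_cols[OF assms(2), where m = b] \<open>a < s\<close>
    by simp
qed

lemma congr_entry_left_block:
  assumes "a \<in> I" "b \<in> I" "c \<in> support_on {..<s} (Qs a)" "c' \<in> support_on {..<s} (Qs b)"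
  shows "congr n (block_diag_id s Qs) D c c' = Qs a c * D a b * Qs b c'"
proof -
  have "a < s" "b < s" "c < s" "c' < s"
    using assms rows_subset by (auto simp: support_on_def)
  have "congr n (block_diag_id s Qs) D c c'
      = block_diag_id s Qs a c * D a b * block_diag_id s Qs b c'"
    unfolding congr_def
  proof (rule sum_sum_eq_single)
    fix k m
    assume "block_diag_id s Qs k c * D k m * block_diag_id s Qs m c' \<noteq> 0"
    then have "k < s" "m < s" "c \<in> support_on {..<s} (Qs k)" "c' \<in> support_on {..<s} (Qs m)"
        "D k m \<noteq> 0"
      using block_diag_id_left_cols[OF \<open>c < s\<close>] block_diag_id_left_cols[OF \<open>c' < s\<close>]
        \<open>c < s\<close> \<open>c' < s\<close>
      by (auto simp: support_on_def split: if_splits)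
    moreover from this have "min k m \<in> I \<and> max k m \<in> I"
      using D_support[of k m] by (auto simp: forced_slots_def)
    ultimately have "k \<in> I" "m \<in> I" by (auto simp: min_def max_def split: if_splits)
    then show "k = a \<and> m = b"
      using row_eq_if_common_support assms
        \<open>c \<in> support_on {..<s} (Qs k)\<close> \<open>c' \<in> support_on {..<s} (Qs m)\<close>
      by blast
  qed (use \<open>a < s\<close> \<open>b < s\<close> s_le_n in auto)
  then show ?thesis using \<open>a < s\<close> \<open>b < s\<close> \<open>c < s\<close> \<open>c' < s\<close> by (simp add: block_diag_id_def)
qed

lemma congr_not_int_matrix:
  assumes "(a, b) \<in> forced_slots s n I" "\<bar>D a b\<bar> = 1"
  shows "\<not> int_matrix n (congr n (block_diag_id s Qs) D)"
proof
  assume int: "int_matrix n (congr n (block_diag_id s Qs) D)"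
  have "a \<in> I" using assms(1) by (auto simp: forced_slots_def)
  obtain a' where "a' \<in> support_on {..<s} (Qs a)" using rows_nonzero[OF \<open>a \<in> I\<close>] by blast
  then have "a < s" "a' < s" "Qs a a' \<noteq> 0"
    using \<open>a \<in> I\<close> rows_subset by (auto simp: support_on_def)
  obtain u v where uv: "u < n" "v < n"
    and lo: "0 < \<bar>congr n (block_diag_id s Qs) D u v\<bar>"
    and hi: "\<bar>congr n (block_diag_id s Qs) D u v\<bar> < 1"
  proof (cases "b < s")
    case True
    then have "b \<in> I" using assms(1) by (auto simp: forced_slots_def)
    obtain b' where "b' \<in> support_on {..<s} (Qs b)" using rows_nonzero[OF \<open>b \<in> I\<close>] by blast
    then have "b' < s" "Qs b b' \<noteq> 0" by (auto simp: support_on_def)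
    have "\<bar>congr n (block_diag_id s Qs) D a' b'\<bar> = \<bar>Qs a a'\<bar> * \<bar>Qs b b'\<bar>"
      using congr_entry_left_block[OF \<open>a \<in> I\<close> \<open>b \<in> I\<close> \<open>a' \<in> _\<close> \<open>b' \<in> _\<close>] assms(2)
      by (simp add: abs_mult)
    moreover have "\<bar>Qs a a'\<bar> * \<bar>Qs b b'\<bar> < 1"
      using abs_mult_less[OF entries_abs_less_1 entries_abs_less_1]
        \<open>a < s\<close> \<open>a' < s\<close> True \<open>b' < s\<close>
      by simp
    ultimately show ?thesis
      using that[of a' b'] \<open>a' < s\<close> \<open>b' < s\<close> s_le_n \<open>Qs a a' \<noteq> 0\<close> \<open>Qs b b' \<noteq> 0\<close> by auto
  next
    case False
    then have "s \<le> b" "b < n" using assms(1) rows_subset by (auto simp: forced_slots_def)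
    have "\<bar>congr n (block_diag_id s Qs) D a' b\<bar> = \<bar>Qs a a'\<bar>"
      using congr_entry_right_block[OF \<open>a \<in> I\<close> \<open>s \<le> b\<close> \<open>b < n\<close> \<open>a' \<in> _\<close>] assms(2)
      by (simp add: abs_mult)
    then show ?thesis
      using that[of a' b] entries_abs_less_1 \<open>a < s\<close> \<open>a' < s\<close> \<open>b < n\<close> s_le_n
        \<open>Qs a a' \<noteq> 0\<close>
      by auto
  qed
  have "congr n (block_diag_id s Qs) D u v \<in> \<int>" using int uv by (simp add: int_matrix_def)
  from Ints_nonzero_abs_less1[OF this hi] show False using lo by simp
qed

end

lemma forced_slots_determined:
  assumes "int_matrix n (congr n (block_diag_id s Qs) (adj_matrix G))"
    and "int_matrix n (congr n (block_diag_id s Qs) (adj_matrix G'))"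
    and agree: "\<forall>x. x \<notin> forced_slots s n I \<longrightarrow> G x = G' x"
  shows "G = G'"
proof (rule ext, rule ccontr)
  fix x assume "G x \<noteq> G' x"
  obtain a b where x: "x = (a, b)" by fastforce
  have "(a, b) \<in> forced_slots s n I" using agree \<open>G x \<noteq> G' x\<close> x by blast
  define D where "D k m = adj_matrix G k m - adj_matrix G' k m" for k m
  have D_support: "(min k m, max k m) \<in> forced_slots s n I" if "D k m \<noteq> 0" for k m
  proof -
    have "G (min k m, max k m) \<noteq> G' (min k m, max k m)"
      using that by (auto simp: D_def adj_matrix_def split: if_splits)
    then show ?thesis using agree by blast
  qed
  have "a < b" using \<open>(a, b) \<in> forced_slots s n I\<close> rows_subset by (auto simp: forced_slots_def)
  then have "\<bar>D a b\<bar> = 1"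
    using \<open>G x \<noteq> G' x\<close> x by (auto simp: D_def adj_matrix_def min_def max_def)
  have "int_matrix n (congr n (block_diag_id s Qs) D)"
    using assms(1,2) unfolding D_def congr_diff int_matrix_def by (auto intro: Ints_diff)
  moreover have "\<not> int_matrix n (congr n (block_diag_id s Qs) D)"
    using congr_not_int_matrix[where D = D, OF D_support] \<open>(a, b) \<in> forced_slots s n I\<close>
      \<open>\<bar>D a b\<bar> = 1\<close>
    by blast
  ultimately show False by contradiction
qed

end

theorem mainTheorem2:
  fixes n s l :: nat and Qs :: "nat \<Rightarrow> nat \<Rightarrow> rat" and p :: real
  assumes "1 \<le> s" and "s \<le> n" and "1 \<le> l"
    and "rat_orthogonal s Qs"
    and "level s Qs = l"
    and "\<forall>i<s. \<forall>j<s. Qs i j = 0 \<or> Qs i j \<notin> \<int>"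
    and "0 < p" and "p < 1"
  shows "measure_pmf.prob (gnp n p)
           {G. int_matrix n (congr n (block_diag_id s Qs) (adj_matrix G))}
         \<le> max p (1 - p) powr
             (real s / (2 * real l ^ 4) * (real s / (2 * real l ^ 4) + real n - real s - 1))"
proof -
  obtain I where I: "I \<subseteq> {..<s}" "disjoint_family_on (\<lambda>i. support_on {..<s} (Qs i)) I"
    "s \<le> l ^ 4 * card I"
    using exists_rows_disjoint_supports[OF assms(4)] assms(5) by blast
  have abs_less_1: "\<bar>Qs i j\<bar> < 1" if "i < s" "j < s" for i j
    using rat_orthogonal_abs_less_1[OF assms(4) that] assms(6) that by blast
  have rows_nonzero: "support_on {..<s} (Qs i) \<noteq> {}" if "i \<in> I" for i
    using rat_orthogonal_row_support_nonempty[OF assms(4)] I(1) that by blast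
  interpret disjoint_support_rows s n Qs I
    using I(1,2) assms(2) rows_nonzero abs_less_1 by unfold_locales
  have "measure_pmf.prob (gnp n p) {G. int_matrix n (congr n (block_diag_id s Qs) (adj_matrix G))}
      \<le> max p (1 - p) ^ card (forced_slots s n I)"
    unfolding gnp_def using forced_slots_determined assms(7,8)
    by (intro measure_Pi_bernoulli_le_if_determined[OF finite_edge_slots
          forced_slots_subset_edge_slots]) auto
  also have "\<dots> = max p (1 - p) powr real (card (forced_slots s n I))"
    using assms(7,8) by (subst powr_realpow) auto
  also have "\<dots> \<le> max p (1 - p) powr
      (real s / (2 * real l ^ 4) * (real s / (2 * real l ^ 4) + real n - real s - 1))"
    using assms(3,7,8) by (intro powr_mono' exponent_le_card_forced_slots[OF assms(1) _ I(3)]) auto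
  finally show ?thesis .
qed

end
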